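(* Let $n\ge 1$ and $M\ge 1$ be integers, let $\mathcal{X}=\{x^{(1)},\dots,x^{(L)}\}\subset\mathbb{C}$ be a finite set of $L$ channel input symbols, let $\sigma^2>0$, let $g:\mathbb{C}\to[0,+\infty]$ be measurable, let $\epsilon>0$, $B>0$ and $\delta\in\mathbb{R}$. Let $\mathscr{C}$ be an $(n,M,\epsilon,B,\delta)$-code (as defined in the context). Then $$\delta\ge\Big(1-\frac1B\sum_{\ell=1}^L P_{\mathscr{C}}(x^{(\ell)})\,\mathbb{E}\big[g(x^{(\ell)}+W)\big]\Big)^+,$$ where $(a)^+=\max(a,0)$ and $W$ is a complex circularly symmetric Gaussian random variable whose real and imaginary parts have zero means and variances $\sigma^2/2$.
   Context: Channel: for an input $\boldsymbol{x}\in\mathbb{C}^n$ the outputs are $\boldsymbol{Y}=\boldsymbol{x}+\boldsymbol{N}_1$ and $\boldsymbol{Z}=\boldsymbol{x}+\boldsymbol{N}_2$, where all components of $\boldsymbol{N}_1,\boldsymbol{N}_2$ are i.i.d. complex circularly symmetric Gaussian with real and imaginary parts of zero mean and variance $\sigma^2/2$; so $f_{Y|X}(y|x)=\frac{1}{\pi\sigma^2}\exp(-|y-x|^2/\sigma^2)$ per coordinate and $f_{\boldsymbol{Y}|\boldsymbol{X}}(\boldsymbol{y}|\boldsymbol{x})=\prod_t f_{Y|X}(y_t|x_t)$ (same for $\boldsymbol{Z}$). An $(n,M)$-code is $\mathscr{C}=\{(\boldsymbol{u}(i),\mathcal{D}_i)\}_{i=1}^M$ with codewords $\boldsymbol{u}(i)=(u_1(i),\dots,u_n(i))\in\mathcal{X}^n$,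 $|u_t(i)|\le P$ for a fixed peak power $P>0$, and pairwise disjoint measurable decoding sets $\mathcal{D}_i\subseteq\mathbb{C}^n$; $M\le 2^{n\lfloor\log_2L\rfloor}$. Error probabilities: $\gamma_i(\mathscr{C})=1-\int_{\mathcal{D}_i}f_{\boldsymbol{Y}|\boldsymbol{X}}(\boldsymbol{y}|\boldsymbol{u}(i))d\boldsymbol{y}$, $\gamma(\mathscr{C})=\frac1M\sum_i\gamma_i$; $(n,M,\epsilon)$-code means $\gamma(\mathscr{C})<\epsilon$. With $\bar g(\boldsymbol z)=\frac1n\sum_t g(z_t)$: $\theta_i(\mathscr{C},B)=\Pr[\bar g(\boldsymbol Z)<B\mid\boldsymbol X=\boldsymbol u(i)]$, $\theta(\mathscr{C},B)=\frac1M\sum_i\theta_i$; $(n,M,\epsilon,B,\delta)$-code means an $(n,M,\epsilon)$-code with $\theta(\mathscr{C},B)<\delta$. Types: $P_{\boldsymbol u(i)}(x^{(\ell)})=\frac1n\#\{t:u_t(i)=x^{(\ell)}\}$, $P_{\mathscr{C}}=\frac1M\sum_iP_{\boldsymbol u(i)}$. *)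

theory Defs
  imports "HOL-Probability.Probability"
begin

text \<open>Complex circularly symmetric Gaussian density with mean x and total variance s2
  (real and imaginary parts each of variance s2/2): f(y|x) = exp(-|y-x|^2/s2)/(pi s2).\<close>
definition cgauss_pdf :: "real \<Rightarrow> complex \<Rightarrow> complex \<Rightarrow> real" where
  "cgauss_pdf s2 x y = exp (- ((cmod (y - x))\<^sup>2) / s2) / (pi * s2)"

text \<open>Output distribution on C^n (coordinates indexed by 1..n) when codeword u is sent;
  the same law governs both Y and Z.\<close>
definition channel_out :: "real \<Rightarrow> nat \<Rightarrow> (nat \<Rightarrow> complex) \<Rightarrow> (nat \<Rightarrow> complex) measure" where
  "channel_out s2 n u = PiM {1..n} (\<lambda>t. density lborel (\<lambda>y. ennreal (cgauss_pdf s2 (u t) y)))"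

definition gbar :: "(complex \<Rightarrow> ennreal) \<Rightarrow> nat \<Rightarrow> (nat \<Rightarrow> complex) \<Rightarrow> ennreal" where
  "gbar g n z = (\<Sum>t\<in>{1..n}. g (z t)) / of_nat n"

definition is_code :: "complex set \<Rightarrow> real \<Rightarrow> nat \<Rightarrow> nat \<Rightarrow> (nat \<Rightarrow> nat \<Rightarrow> complex)
    \<Rightarrow> (nat \<Rightarrow> (nat \<Rightarrow> complex) set) \<Rightarrow> bool" where
  "is_code X P n M u D \<longleftrightarrow>
     (\<forall>i\<in>{1..M}. \<forall>t\<in>{1..n}. u i t \<in> X \<and> cmod (u i t) \<le> P) \<and>
     (\<forall>i\<in>{1..M}. D i \<in> sets (PiM {1..n} (\<lambda>_. (lborel :: complex measure)))) \<and>
     disjoint_family_on D {1..M} \<and>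
     M \<le> 2 ^ (n * nat \<lfloor>log 2 (real (card X))\<rfloor>)"

definition avg_error :: "real \<Rightarrow> nat \<Rightarrow> nat \<Rightarrow> (nat \<Rightarrow> nat \<Rightarrow> complex)
    \<Rightarrow> (nat \<Rightarrow> (nat \<Rightarrow> complex) set) \<Rightarrow> real" where
  "avg_error s2 n M u D =
     (\<Sum>i\<in>{1..M}. 1 - measure (channel_out s2 n (u i)) (D i)) / real M"

definition avg_theta :: "real \<Rightarrow> (complex \<Rightarrow> ennreal) \<Rightarrow> real \<Rightarrow> nat \<Rightarrow> nat
    \<Rightarrow> (nat \<Rightarrow> nat \<Rightarrow> complex) \<Rightarrow> real" where
  "avg_theta s2 g B n M u =
     (\<Sum>i\<in>{1..M}. measure (channel_out s2 n (u i))
        {z \<in> space (channel_out s2 n (u i)). gbar g n z < ennreal B}) / real M"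

definition is_code_eps :: "complex set \<Rightarrow> real \<Rightarrow> real \<Rightarrow> nat \<Rightarrow> nat \<Rightarrow> real
    \<Rightarrow> (nat \<Rightarrow> nat \<Rightarrow> complex) \<Rightarrow> (nat \<Rightarrow> (nat \<Rightarrow> complex) set) \<Rightarrow> bool" where
  "is_code_eps X P s2 n M eps u D \<longleftrightarrow> is_code X P n M u D \<and> avg_error s2 n M u D < eps"

definition is_code_full :: "complex set \<Rightarrow> real \<Rightarrow> real \<Rightarrow> (complex \<Rightarrow> ennreal) \<Rightarrow> nat \<Rightarrow> nat
    \<Rightarrow> real \<Rightarrow> real \<Rightarrow> real \<Rightarrow> (nat \<Rightarrow> nat \<Rightarrow> complex) \<Rightarrow> (nat \<Rightarrow> (nat \<Rightarrow> complex) set) \<Rightarrow> bool" where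
  "is_code_full X P s2 g n M eps B delta u D \<longleftrightarrow>
     is_code_eps X P s2 n M eps u D \<and> avg_theta s2 g B n M u < delta"

definition cw_type :: "nat \<Rightarrow> (nat \<Rightarrow> complex) \<Rightarrow> complex \<Rightarrow> real" where
  "cw_type n v x = real (card {t \<in> {1..n}. v t = x}) / real n"

definition code_type :: "nat \<Rightarrow> nat \<Rightarrow> (nat \<Rightarrow> nat \<Rightarrow> complex) \<Rightarrow> complex \<Rightarrow> real" where
  "code_type n M u x = (\<Sum>i\<in>{1..M}. cw_type n (u i) x) / real M"

end

theory Submission
  imports Defs
begin

text \<open>For each codeword \<open>u\<close>, Markov's inequality gives
  \<open>B (1 - Pr[gbar(Z) < B]) \<le> E[gbar(Z)]\<close>. Since \<open>Z\<^sub>t = u\<^sub>t + W\<^sub>t\<close> with i.i.d. Gaussian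
  \<open>W\<^sub>t\<close>, the expectation \<open>E[gbar(Z)] = \<Sum>\<^sub>x P\<^sub>u(x) E[g(x + W)]\<close> depends on \<open>u\<close> only
  through its type. Averaging over the \<open>M\<close> codewords replaces the types by the code type
  and the probabilities by \<open>\<theta>(C, B) < \<delta>\<close>.\<close>

lemma nn_integral_lborel_translate:
  fixes h :: "'a::euclidean_space \<Rightarrow> ennreal"
  assumes "h \<in> borel_measurable borel"
  shows "(\<integral>\<^sup>+y. h y \<partial>lborel) = (\<integral>\<^sup>+w. h (x + w) \<partial>lborel)"
proof -
  have "(\<integral>\<^sup>+y. h y \<partial>lborel) = (\<integral>\<^sup>+y. h y \<partial>distr lborel borel ((+) x))"
    by (simp add: lborel_distr_plus)
  also have "\<dots> = (\<integral>\<^sup>+w. h (x + w) \<partial>lborel)"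
    using assms by (simp add: nn_integral_distr)
  finally show ?thesis .
qed

lemma sum_divide_distrib_ennreal:
  fixes f :: "'a \<Rightarrow> ennreal"
  shows "(\<Sum>i\<in>I. f i) / r = (\<Sum>i\<in>I. f i / r)"
  by (simp add: divide_ennreal_def sum_distrib_right)

lemma ennreal_mult_divide_ennreal:
  assumes "0 \<le> a" and "c > 0"
  shows "ennreal a * b / ennreal c = ennreal (a / c) * b"
  using assms by (simp add: divide_ennreal[symmetric] ennreal_times_divide mult_ac)

lemma ennreal_mult_one_minus_average_le:
  assumes "finite I" and "I \<noteq> {}" and "\<And>i. i \<in> I \<Longrightarrow> p i \<le> 1"
    and "\<And>i. i \<in> I \<Longrightarrow> ennreal c * ennreal (1 - p i) \<le> e i"
  shows "ennreal c * ennreal (1 - (\<Sum>i\<in>I. p i) / card I) \<le> (\<Sum>i\<in>I. e i) / of_nat (card I)"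
proof -
  have card: "real (card I) > 0"
    using assms(1,2) by (simp add: card_gt_0_iff)
  have "(1 - (\<Sum>i\<in>I. p i) / card I) * card I = (\<Sum>i\<in>I. 1 - p i)"
    using card by (simp add: sum_subtractf field_simps)
  then have "ennreal c * ennreal (1 - (\<Sum>i\<in>I. p i) / card I) * of_nat (card I)
      = ennreal c * ennreal (\<Sum>i\<in>I. 1 - p i)"
    by (simp add: ennreal_of_nat_eq_real_of_nat ennreal_mult''[symmetric] mult.assoc)
  also have "\<dots> = ennreal c * (\<Sum>i\<in>I. ennreal (1 - p i))"
    using assms(3) by (simp add: sum_ennreal)
  also have "\<dots> = (\<Sum>i\<in>I. ennreal c * ennreal (1 - p i))"
    by (simp add: sum_distrib_left)
  also have "\<dots> \<le> (\<Sum>i\<in>I. e i)"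
    using assms(4) by (rule sum_mono)
  finally have "ennreal c * ennreal (1 - (\<Sum>i\<in>I. p i) / card I) * of_nat (card I) / of_nat (card I)
      \<le> (\<Sum>i\<in>I. e i) / of_nat (card I)"
    by (rule divide_right_mono_ennreal)
  then show ?thesis
    using card by (simp add: ennreal_mult_divide_eq)
qed

lemma enn2real_one_minus_divide_le:
  assumes "B > 0" and "0 \<le> t" and "ennreal B * ennreal (1 - t) \<le> S"
  shows "enn2real (1 - S / ennreal B) \<le> t"
proof (cases S)
  case (real s)
  have "B * (1 - t) \<le> s"
  proof (cases "t \<le> 1")
    case True
    then show ?thesis
      using assms real by (simp add: ennreal_mult[symmetric])
  next
    case False
    then have "B * (1 - t) \<le> 0"
      using assms(1) by (simp add: mult_nonneg_nonpos)
    then show ?thesis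
      using real by simp
  qed
  then have "1 - s / B \<le> t"
    using assms(1) by (simp add: field_simps)
  moreover have "1 - S / ennreal B = ennreal (1 - s / B)"
    using real assms(1) by (simp add: divide_ennreal ennreal_minus[symmetric])
  ultimately show ?thesis
    using assms(2) by (cases "0 \<le> 1 - s / B") (auto simp: ennreal_neg)
qed (use assms in \<open>simp add: ennreal_top_divide minus_top_ennreal\<close>)

lemma (in prob_space) Markov_inequality_complement:
  assumes [measurable]: "f \<in> borel_measurable M"
  shows "ennreal c * ennreal (1 - prob {x \<in> space M. f x < ennreal c}) \<le> (\<integral>\<^sup>+x. f x \<partial>M)"
proof -
  let ?S = "{x \<in> space M. ennreal c \<le> f x}"
  have "space M - {x \<in> space M. f x < ennreal c} = ?S"
    by (auto simp: not_less)
  then have "ennreal (1 - prob {x \<in> space M. f x < ennreal c}) = emeasure M ?S"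
    by (simp add: prob_compl[symmetric] emeasure_eq_measure)
  then have "ennreal c * ennreal (1 - prob {x \<in> space M. f x < ennreal c})
      = (\<integral>\<^sup>+x. ennreal c * indicator ?S x \<partial>M)"
    by (simp add: nn_integral_cmult_indicator)
  also have "\<dots> \<le> (\<integral>\<^sup>+x. f x \<partial>M)"
    by (intro nn_integral_mono) (auto split: split_indicator)
  finally show ?thesis .
qed

lemma cgauss_pdf_translate: "cgauss_pdf s2 x (x + w) = cgauss_pdf s2 0 w"
  by (simp add: cgauss_pdf_def)

lemma borel_measurable_cgauss_pdf[measurable]: "cgauss_pdf s2 x \<in> borel_measurable borel"
  unfolding cgauss_pdf_def by measurable

lemma cgauss_pdf_eq_normal_density_product:
  assumes "s2 > 0"
  shows "cgauss_pdf s2 0 w =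
    normal_density 0 (sqrt (s2/2)) (Re w) * normal_density 0 (sqrt (s2/2)) (Im w)"
proof -
  have "exp (- (Re w)\<^sup>2 / s2) * exp (- (Im w)\<^sup>2 / s2) = exp (- (cmod w)\<^sup>2 / s2)"
    by (simp add: exp_add[symmetric] cmod_power2 add_divide_distrib diff_divide_distrib)
  moreover have "sqrt (pi * s2) * sqrt (pi * s2) = pi * s2"
    using assms by simp
  ultimately show ?thesis
    using assms unfolding cgauss_pdf_def normal_density_def by (simp add: field_simps)
qed

lemma nn_integral_cgauss_pdf:
  assumes "s2 > 0"
  shows "(\<integral>\<^sup>+y. ennreal (cgauss_pdf s2 x y) \<partial>lborel) = 1"
proof -
  let ?f = "\<lambda>_::complex. \<lambda>r. ennreal (normal_density 0 (sqrt (s2/2)) r)"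
  have "(\<integral>\<^sup>+y. ennreal (cgauss_pdf s2 x y) \<partial>lborel) = (\<integral>\<^sup>+w. ennreal (cgauss_pdf s2 0 w) \<partial>lborel)"
    by (subst nn_integral_lborel_translate[where x = x]) (simp_all add: cgauss_pdf_translate)
  also have "\<dots> = (\<integral>\<^sup>+w. (\<Prod>b\<in>Basis. ?f b (w \<bullet> b)) \<partial>lborel)"
    using assms
    by (intro nn_integral_cong)
       (simp add: Basis_complex_def inner_complex_def cgauss_pdf_eq_normal_density_product ennreal_mult)
  also have "\<dots> = (\<Prod>b\<in>Basis. \<integral>\<^sup>+r. ?f b r \<partial>lborel)"
    by (rule nn_integral_lborel_prod) auto
  also have "\<dots> = 1"
    using assms by (subst nn_integral_eq_integral) (auto intro: integrable_normal_density)
  finally show ?thesis .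
qed

lemma prob_space_cgauss:
  assumes "s2 > 0"
  shows "prob_space (density lborel (\<lambda>y. ennreal (cgauss_pdf s2 x y)))"
  by standard (simp add: emeasure_density nn_integral_cgauss_pdf[OF assms])

lemma nn_integral_cgauss_density:
  assumes [measurable]: "g \<in> borel_measurable borel"
  shows "(\<integral>\<^sup>+y. g y \<partial>density lborel (\<lambda>y. ennreal (cgauss_pdf s2 x y)))
       = (\<integral>\<^sup>+w. g (x + w) * ennreal (cgauss_pdf s2 0 w) \<partial>lborel)"
proof -
  have "(\<integral>\<^sup>+y. g y \<partial>density lborel (\<lambda>y. ennreal (cgauss_pdf s2 x y)))
      = (\<integral>\<^sup>+y. ennreal (cgauss_pdf s2 x y) * g y \<partial>lborel)"
    by (simp add: nn_integral_density)
  also have "\<dots> = (\<integral>\<^sup>+w. ennreal (cgauss_pdf s2 x (x + w)) * g (x + w) \<partial>lborel)"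
    by (rule nn_integral_lborel_translate) measurable
  finally show ?thesis
    by (simp add: cgauss_pdf_translate mult.commute)
qed

lemma prob_space_channel_out:
  assumes "s2 > 0"
  shows "prob_space (channel_out s2 n v)"
  unfolding channel_out_def by (intro prob_space_PiM prob_space_cgauss[OF assms])

lemma borel_measurable_gbar[measurable]:
  assumes [measurable]: "g \<in> borel_measurable borel"
  shows "gbar g n \<in> borel_measurable (channel_out s2 n v)"
  unfolding gbar_def channel_out_def by measurable

lemma nn_integral_channel_out_component:
  assumes "s2 > 0" and [measurable]: "g \<in> borel_measurable borel" and t: "t \<in> {1..n}"
  shows "(\<integral>\<^sup>+z. g (z t) \<partial>channel_out s2 n v)
       = (\<integral>\<^sup>+w. g (v t + w) * ennreal (cgauss_pdf s2 0 w) \<partial>lborel)"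
proof -
  let ?N = "density lborel (\<lambda>y. ennreal (cgauss_pdf s2 (v t) y))"
  have "distr (channel_out s2 n v) ?N (\<lambda>z. z t) = ?N"
    unfolding channel_out_def
    by (rule distr_PiM_component) (use t prob_space_cgauss[OF assms(1)] in auto)
  then have "(\<integral>\<^sup>+z. g (z t) \<partial>channel_out s2 n v) = (\<integral>\<^sup>+y. g y \<partial>?N)"
    unfolding channel_out_def
    by (subst nn_integral_distr[OF measurable_component_singleton, symmetric]) (use t in auto)
  then show ?thesis
    by (simp add: nn_integral_cgauss_density)
qed

lemma sum_eq_sum_cw_type:
  fixes G :: "complex \<Rightarrow> ennreal"
  assumes "finite X" and "\<forall>t\<in>{1..n}. v t \<in> X"
  shows "(\<Sum>t\<in>{1..n}. G (v t)) / of_nat n = (\<Sum>x\<in>X. ennreal (cw_type n v x) * G x)"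
proof -
  have "(\<Sum>t\<in>{1..n}. G (v t)) = (\<Sum>x\<in>X. \<Sum>t\<in>{t\<in>{1..n}. v t = x}. G (v t))"
    by (rule sum.group[symmetric]) (use assms in auto)
  also have "\<dots> = (\<Sum>x\<in>X. of_nat (card {t\<in>{1..n}. v t = x}) * G x)"
    by simp
  also have "\<dots> / of_nat n = (\<Sum>x\<in>X. ennreal (cw_type n v x) * G x)"
  proof (cases "n = 0")
    case False
    then show ?thesis
      by (simp add: sum_divide_distrib_ennreal ennreal_of_nat_eq_real_of_nat
          ennreal_mult_divide_ennreal cw_type_def)
  qed (simp add: cw_type_def)
  finally show ?thesis .
qed

lemma nn_integral_gbar_channel_out:
  assumes "s2 > 0" and [measurable]: "g \<in> borel_measurable borel"
    and "finite X" and "\<forall>t\<in>{1..n}. v t \<in> X"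
  shows "(\<integral>\<^sup>+z. gbar g n z \<partial>channel_out s2 n v)
       = (\<Sum>x\<in>X. ennreal (cw_type n v x) * (\<integral>\<^sup>+w. g (x + w) * ennreal (cgauss_pdf s2 0 w) \<partial>lborel))"
proof -
  have "(\<integral>\<^sup>+z. gbar g n z \<partial>channel_out s2 n v)
      = (\<Sum>t\<in>{1..n}. \<integral>\<^sup>+z. g (z t) \<partial>channel_out s2 n v) / of_nat n"
    unfolding gbar_def divide_ennreal_def channel_out_def
    by (subst nn_integral_multc, measurable, subst nn_integral_sum, measurable)
  also have "\<dots> = (\<Sum>t\<in>{1..n}. \<integral>\<^sup>+w. g (v t + w) * ennreal (cgauss_pdf s2 0 w) \<partial>lborel) / of_nat n"
    using assms(1,2) by (simp add: nn_integral_channel_out_component)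
  also have "\<dots> = (\<Sum>x\<in>X. ennreal (cw_type n v x) * (\<integral>\<^sup>+w. g (x + w) * ennreal (cgauss_pdf s2 0 w) \<partial>lborel))"
    by (rule sum_eq_sum_cw_type) (use assms(3,4) in auto)
  finally show ?thesis .
qed

lemma sum_sum_cw_type_eq_code_type:
  fixes G :: "complex \<Rightarrow> ennreal"
  shows "(\<Sum>i\<in>{1..M}. \<Sum>x\<in>X. ennreal (cw_type n (u i) x) * G x) / of_nat M
       = (\<Sum>x\<in>X. ennreal (code_type n M u x) * G x)"
proof -
  have "(\<Sum>i\<in>{1..M}. \<Sum>x\<in>X. ennreal (cw_type n (u i) x) * G x)
      = (\<Sum>x\<in>X. ennreal (\<Sum>i\<in>{1..M}. cw_type n (u i) x) * G x)"
    by (subst sum.swap, intro sum.cong)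
       (simp_all add: sum_distrib_right[symmetric] sum_ennreal cw_type_def)
  also have "\<dots> / of_nat M = (\<Sum>x\<in>X. ennreal (code_type n M u x) * G x)"
  proof (cases "M = 0")
    case False
    then show ?thesis
      by (simp add: sum_divide_distrib_ennreal ennreal_of_nat_eq_real_of_nat
          ennreal_mult_divide_ennreal code_type_def sum_nonneg cw_type_def)
  qed (simp add: code_type_def)
  finally show ?thesis .
qed

lemma Markov_bound_channel_out:
  assumes "s2 > 0" and "g \<in> borel_measurable borel"
    and "finite X" and "\<forall>t\<in>{1..n}. v t \<in> X"
  shows "ennreal B * ennreal (1 - measure (channel_out s2 n v)
           {z \<in> space (channel_out s2 n v). gbar g n z < ennreal B})
       \<le> (\<Sum>x\<in>X. ennreal (cw_type n v x) * (\<integral>\<^sup>+w. g (x + w) * ennreal (cgauss_pdf s2 0 w) \<partial>lborel))"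
proof -
  interpret prob_space "channel_out s2 n v"
    using assms(1) by (rule prob_space_channel_out)
  show ?thesis
    using Markov_inequality_complement[OF borel_measurable_gbar[OF assms(2)]]
    by (simp add: nn_integral_gbar_channel_out[OF assms])
qed

theorem corollary1:
  fixes n M :: nat and X :: "complex set" and sigma P eps B delta :: real
    and g :: "complex \<Rightarrow> ennreal"
    and u :: "nat \<Rightarrow> nat \<Rightarrow> complex" and D :: "nat \<Rightarrow> (nat \<Rightarrow> complex) set"
  assumes "n \<ge> 1" and "M \<ge> 1" and "finite X" and "X \<noteq> {}"
    and "sigma > 0" and "P > 0"
    and "g \<in> borel_measurable borel"
    and "eps > 0" and "B > 0"
    and "is_code_full X P (sigma\<^sup>2) g n M eps B delta u D"
  shows "delta \<ge> enn2real (1 - (\<Sum>x\<in>X. ennreal (code_type n M u x) *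
            (\<integral>\<^sup>+ w. g (x + w) * ennreal (cgauss_pdf (sigma\<^sup>2) 0 w) \<partial>lborel)) / ennreal B)"
proof -
  define G where "G x = (\<integral>\<^sup>+w. g (x + w) * ennreal (cgauss_pdf (sigma\<^sup>2) 0 w) \<partial>lborel)" for x
  define th where "th i = measure (channel_out (sigma\<^sup>2) n (u i))
    {z \<in> space (channel_out (sigma\<^sup>2) n (u i)). gbar g n z < ennreal B}" for i
  have s2: "sigma\<^sup>2 > 0"
    using assms(5) by simp
  have code: "is_code X P n M u D" and theta: "avg_theta (sigma\<^sup>2) g B n M u < delta"
    using assms(10) unfolding is_code_full_def is_code_eps_def by auto
  have th_bounds: "0 \<le> th i" "th i \<le> 1" for i
    unfolding th_def using prob_space.prob_le_1[OF prob_space_channel_out[OF s2]] by simp_all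
  have markov: "ennreal B * ennreal (1 - th i) \<le> (\<Sum>x\<in>X. ennreal (cw_type n (u i) x) * G x)"
    if "i \<in> {1..M}" for i
    using code that unfolding is_code_def th_def G_def
    by (intro Markov_bound_channel_out[OF s2 assms(7,3)]) auto
  have avg_theta: "avg_theta (sigma\<^sup>2) g B n M u = (\<Sum>i\<in>{1..M}. th i) / card {1..M}"
    unfolding avg_theta_def th_def by simp
  have "ennreal B * ennreal (1 - avg_theta (sigma\<^sup>2) g B n M u)
      \<le> (\<Sum>i\<in>{1..M}. \<Sum>x\<in>X. ennreal (cw_type n (u i) x) * G x) / of_nat (card {1..M})"
    unfolding avg_theta
    by (rule ennreal_mult_one_minus_average_le) (use assms(2) th_bounds markov in auto)
  also have "\<dots> = (\<Sum>x\<in>X. ennreal (code_type n M u x) * G x)"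
    using sum_sum_cw_type_eq_code_type[where G = G] by simp
  finally have "enn2real (1 - (\<Sum>x\<in>X. ennreal (code_type n M u x) * G x) / ennreal B)
      \<le> avg_theta (sigma\<^sup>2) g B n M u"
    using assms(9) th_bounds(1)
    by (intro enn2real_one_minus_divide_le) (simp_all add: avg_theta sum_nonneg)
  with theta show ?thesis
    unfolding G_def by simp
qed

end
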